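(* Let $r>0$ and let $\mathcal D=\{({\bm{x}}_i,y_i)\}_{i=1}^n$, ${\bm{x}}_i\in\mathbb{R}^d$, $y_i\in[K]$, be a dataset that is $r$-separated with respect to the $\ell_\infty$-norm. Then there exists a two-layer $\ell_\infty$-distance net ${\bm{g}}:\mathbb{R}^d\to\mathbb{R}^K$ with hidden size $n$ such that the margin-based certified $\ell_\infty$ robust accuracy on $\mathcal D$ under perturbation $\epsilon=r$ is $100\%$, i.e. $\mathsf{margin}({\bm{x}}_i,y_i;{\bm{g}})/2>r$ for every $i\in[n]$.
   Context: $r$-separation: $\mathcal D$ is $r$-separated w.r.t. $\ell_\infty$ if for all $i,j$ with $y_i\neq y_j$ one has $\|{\bm{x}}_i-{\bm{x}}_j\|_\infty>2r$. An $L$-layer $\ell_\infty$-distance net ${\bm{g}}$ with input ${\bm{x}}^{(0)}={\bm{x}}$ computes $x^{(l)}_i=\|{\bm{x}}^{(l-1)}-{\bm{w}}^{(l,i)}\|_\infty+b^{(l)}_i$ ($l\in[L]$, $i\in[n_l]$, arbitrary real parameters), with $n_L=K$ and ${\bm{g}}({\bm{x}})={\bm{x}}^{(L)}$; "hidden size" is the width $n_l$ of the hidden layers $l<L$. The output margin is $\mathsf{margin}({\bm{x}},y;{\bm{g}})=[{\bm{g}}({\bm{x}})]_y-\max_{j\neq y}[{\bm{g}}({\bm{x}})]_j$. Margin-based certification declares the labeled point $({\bm{x}},y)$ certifiably robust at level $\epsilon$ iff $\mathsf{margin}({\bm{x}},y;{\bm{g}})/2>\epsilon$. *)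

theory Defs
  imports "HOL-Analysis.Analysis"
begin

text \<open>Conventions: the input dimension d is the finite index type 'd (points in real^'d),
  the dataset index set [n] is the finite type 'n (n = CARD('n)), the label set [K] is the
  finite type 'k (K = CARD('k)).\<close>

definition r_separated :: "real \<Rightarrow> ('n::finite \<Rightarrow> real^'d::finite) \<Rightarrow> ('n \<Rightarrow> 'k) \<Rightarrow> bool" where
  "r_separated r X Y \<longleftrightarrow> (\<forall>i j. Y i \<noteq> Y j \<longrightarrow> infnorm (X i - X j) > 2 * r)"

definition linf_layer :: "real^'a::finite^'m::finite \<Rightarrow> real^'m \<Rightarrow> real^'a \<Rightarrow> real^'m" where
  "linf_layer W b v = (\<chi> i. infnorm (v - W $ i) + b $ i)"

definition linf_net2 ::
  "real^'d::finite^'h::finite \<Rightarrow> real^'h \<Rightarrow> real^'h^'k::finite \<Rightarrow> real^'k \<Rightarrow> real^'d \<Rightarrow> real^'k" where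
  "linf_net2 W1 b1 W2 b2 x = linf_layer W2 b2 (linf_layer W1 b1 x)"

definition margin :: "(real^'d \<Rightarrow> real^'k::finite) \<Rightarrow> real^'d \<Rightarrow> 'k \<Rightarrow> real" where
  "margin g x y = g x $ y - Max {g x $ j | j. j \<noteq> y}"

end

theory Submission
  imports Defs
begin

text \<open>The hidden layer computes the distances h j = infnorm (x - X j) to all data points, so
  h i = 0 at x = X i. Output unit k compares h with the template that is C on the points of
  class k and C/2 elsewhere. At X i the unit of the true class sees the coordinate i at distance
  C, while for every other class k each coordinate is at distance less than C - 2r: points of
  class k have h j > 2r by separation, and the remaining ones sit within C/2 of the middle value
  C/2. Hence the margin exceeds 2r once C exceeds both 4r and all pairwise distances.\<close>

lemma infnorm_less_iff_cart: "infnorm (x::real^'n::finite) < c \<longleftrightarrow> (\<forall>i. \<bar>x$i\<bar> < c)"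
proof -
  have "{\<bar>x$i\<bar> |i. i \<in> UNIV} = range (\<lambda>i. \<bar>x$i\<bar>)" by auto
  then show ?thesis
    by (simp add: infnorm_cart cSup_eq_Max Max_less_iff)
qed

lemma exists_other_if_card_ge_2:
  assumes "CARD('k::finite) \<ge> 2"
  shows "\<exists>j::'k. j \<noteq> y"
proof (rule ccontr)
  assume "\<not> (\<exists>j::'k. j \<noteq> y)"
  then have "(UNIV::'k set) = {y}" by auto
  then have "CARD('k) = 1" using card_1_singleton_iff by auto
  then show False using assms by simp
qed

lemma margin_gt:
  fixes g :: "real^'d \<Rightarrow> real^'k::finite"
  assumes "CARD('k) \<ge> 2" and "a \<le> g x $ y" and "\<And>j. j \<noteq> y \<Longrightarrow> g x $ j < b"
  shows "a - b < margin g x y"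
proof -
  have "{g x $ j | j. j \<noteq> y} \<noteq> {}"
    using exists_other_if_card_ge_2[OF assms(1)] by auto
  then have "Max {g x $ j | j. j \<noteq> y} < b"
    using assms(3) by (auto simp: Max_less_iff)
  then show ?thesis
    using assms(2) unfolding margin_def by simp
qed

definition class_template :: "real \<Rightarrow> ('n \<Rightarrow> 'k) \<Rightarrow> real^'n::finite^'k::finite" where
  "class_template C Y = (\<chi> k j. if Y j = k then C else C / 2)"

lemma linf_net2_distance_layer:
  "linf_net2 (\<chi> j. X j) 0 W2 0 x = (\<chi> k. infnorm ((\<chi> j. infnorm (x - X j)) - W2 $ k))"
  by (simp add: linf_net2_def linf_layer_def)

lemma class_template_true_class:
  assumes "h $ i = 0" and "0 \<le> C"
  shows "C \<le> infnorm (h - class_template C Y $ Y i)"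
  using component_le_infnorm_cart[of "h - class_template C Y $ Y i" i] assms
  by (simp add: class_template_def)

lemma class_template_other_class:
  assumes "4 * r < C" and "\<And>j. 0 \<le> h $ j" and "\<And>j. h $ j < C"
    and "\<And>j. Y j = k \<Longrightarrow> 2 * r < h $ j"
  shows "infnorm (h - class_template C Y $ k) < C - 2 * r"
  unfolding infnorm_less_iff_cart
proof
  fix j
  show "\<bar>(h - class_template C Y $ k) $ j\<bar> < C - 2 * r"
    using assms(1) assms(2,3,4)[of j] by (auto simp: class_template_def abs_less_iff)
qed

lemma class_template_net_margin:
  fixes X :: "'n::finite \<Rightarrow> real^'d::finite" and Y :: "'n \<Rightarrow> 'k::finite"
  assumes "CARD('k) \<ge> 2" and "r_separated r X Y"
    and "4 * r < C" and "\<And>i j. infnorm (X i - X j) < C"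
  shows "2 * r < margin (linf_net2 (\<chi> j. X j) 0 (class_template C Y) 0) (X i) (Y i)"
proof -
  let ?g = "linf_net2 (\<chi> j. X j) 0 (class_template C Y) 0"
  let ?h = "\<chi> j. infnorm (X i - X j)"
  have "C \<le> ?g (X i) $ Y i"
    unfolding linf_net2_distance_layer
    using assms(3) assms(4)[of i i] infnorm_pos_le[of "X i - X i"]
    by (auto simp: infnorm_0 intro!: class_template_true_class[where i = i])
  moreover have "?g (X i) $ k < C - 2 * r" if "k \<noteq> Y i" for k
  proof -
    have "infnorm (?h - class_template C Y $ k) < C - 2 * r"
    proof (rule class_template_other_class)
      show "2 * r < ?h $ j" if "Y j = k" for j
        using assms(2) \<open>k \<noteq> Y i\<close> that unfolding r_separated_def by simp
    qed (use assms(3,4) in \<open>simp_all add: infnorm_pos_le\<close>)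
    then show ?thesis unfolding linf_net2_distance_layer by simp
  qed
  ultimately have "C - (C - 2 * r) < margin ?g (X i) (Y i)"
    by (rule margin_gt[OF assms(1)])
  then show ?thesis by simp
qed

theorem mainTheorem4:
  fixes r :: real
    and X :: "'n::finite \<Rightarrow> real^'d::finite"
    and Y :: "'n \<Rightarrow> 'k::finite"
  assumes "r > 0"
    and "CARD('k) \<ge> 2"
    and "r_separated r X Y"
  shows "\<exists>(W1 :: real^'d^'n) (b1 :: real^'n) (W2 :: real^'n^'k) (b2 :: real^'k).
           \<forall>i. margin (linf_net2 W1 b1 W2 b2) (X i) (Y i) / 2 > r"
proof -
  define S where "S = (\<Sum>i\<in>UNIV. \<Sum>j\<in>UNIV. infnorm (X i - X j))"
  define C where "C = 4 * r + 1 + S"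
  have dist_le_S: "infnorm (X i - X j) \<le> S" for i j
  proof -
    have "infnorm (X i - X j) \<le> (\<Sum>j\<in>UNIV. infnorm (X i - X j))"
      by (rule member_le_sum) (auto simp: infnorm_pos_le)
    also have "\<dots> \<le> S" unfolding S_def
      by (rule member_le_sum) (auto intro: sum_nonneg simp: infnorm_pos_le)
    finally show ?thesis .
  qed
  then have "0 \<le> S" by (meson infnorm_pos_le order_trans)
  have C_gt: "4 * r < C" "infnorm (X i - X j) < C" for i j
    using dist_le_S[of i j] \<open>0 \<le> S\<close> assms(1) by (simp_all add: C_def)
  have "2 * r < margin (linf_net2 (\<chi> j. X j) 0 (class_template C Y) 0) (X i) (Y i)" for i
    by (rule class_template_net_margin[OF assms(2,3) C_gt])
  then have "\<forall>i. r < margin (linf_net2 (\<chi> j. X j) 0 (class_template C Y) 0) (X i) (Y i) / 2"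
    by (simp add: field_simps)
  then show ?thesis by blast
qed

end
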